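(* Let $X$ be a Hausdorff locally compact space and $\sigma\colon\mathrm{Dom}(\sigma)\to\mathrm{Ran}(\sigma)$ a local homeomorphism between open subsets of $X$, with Deaconu–Renault groupoid $\mathcal{G}_\sigma$. Then $A(\sigma)$ and $P_0(\sigma)$ are $\mathcal{G}_\sigma$-invariant subsets of $X$, and $A(\sigma)\cup P_0(\sigma)$ equals the set of points $x\in X$ such that $\mathrm{Iso}((\mathcal{G}_\sigma)_{\overline{[x]}})^\circ_x=(\mathcal{G}_\sigma)^x_x$.
   Context: $\sigma^0=\mathrm{id}_X$ and $\sigma^n$ is the $n$-fold composition with natural domain $\mathrm{Dom}(\sigma^n)$. $\mathcal{G}_\sigma=\{(x,m-n,y): m,n\ge0,\ x\in\mathrm{Dom}(\sigma^m),\ y\in\mathrm{Dom}(\sigma^n),\ \sigma^m(x)=\sigma^n(y)\}$ with $r(x,p,y)=x$, $s(x,p,y)=y$, $(x,p,y)(y,q,w)=(x,p+q,w)$, unit space $X$, topology with basis $Z(U,m,n,V)=\{(x,m-n,y): x\in U\cap\mathrm{Dom}(\sigma^m),\ y\in V\cap\mathrm{Dom}(\sigma^n),\ \sigma^m(x)=\sigma^n(y)\}$. The orbit $[x]$ is $\{y:\sigma^m(y)=\sigma^n(x)\text{ for some }m,n\ge0\}$. $A(\sigma)$ is the set of aperiodic points (no $l\ge0,p\ge1$ with $\sigma^{l+p}(x)=\sigma^l(x)$); $P_0(\sigma)$ is the set of periodic points $x$ that are isolated points of $[x]$ (relative topology). For closed invariant $Y\subset X$, $(\mathcal{G}_\sigma)_Y=s^{-1}(Y)$,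 and $\mathrm{Iso}((\mathcal{G}_\sigma)_{\overline{[x]}})^\circ_x$ is the intersection with $(\mathcal{G}_\sigma)^x_x$ of the interior in $(\mathcal{G}_\sigma)_{\overline{[x]}}$ of its isotropy bundle $\{g: s(g)=r(g)\}$. *)

theory Defs
  imports "HOL-Analysis.Analysis"
begin

text \<open>A partially defined map sigma : Dom(sigma) -> Ran(sigma), Dom, Ran open in X,
  represented by a total function together with its domain D; Ran = sigma ` D.\<close>

definition local_homeo_on :: "'a topology \<Rightarrow> 'a set \<Rightarrow> ('a \<Rightarrow> 'a) \<Rightarrow> bool" where
  "local_homeo_on X D \<sigma> \<longleftrightarrow>
     openin X D \<and> openin X (\<sigma> ` D) \<and>
     (\<forall>x\<in>D. \<exists>U. openin X U \<and> x \<in> U \<and> U \<subseteq> D \<and> openin X (\<sigma> ` U) \<and>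
        homeomorphic_map (subtopology X U) (subtopology X (\<sigma> ` U)) \<sigma>)"

text \<open>Natural domain of the n-fold composition sigma^n (sigma^0 = id_X).\<close>
definition dom_pow :: "'a topology \<Rightarrow> 'a set \<Rightarrow> ('a \<Rightarrow> 'a) \<Rightarrow> nat \<Rightarrow> 'a set" where
  "dom_pow X D \<sigma> n = {x \<in> topspace X. \<forall>k<n. (\<sigma> ^^ k) x \<in> D}"

definition DR_groupoid :: "'a topology \<Rightarrow> 'a set \<Rightarrow> ('a \<Rightarrow> 'a) \<Rightarrow> ('a \<times> int \<times> 'a) set" where
  "DR_groupoid X D \<sigma> = {(x, int m - int n, y) | x y m n.
      x \<in> dom_pow X D \<sigma> m \<and> y \<in> dom_pow X D \<sigma> n \<and> (\<sigma> ^^ m) x = (\<sigma> ^^ n) y}"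

definition DR_r :: "'a \<times> int \<times> 'a \<Rightarrow> 'a" where "DR_r g = fst g"
definition DR_s :: "'a \<times> int \<times> 'a \<Rightarrow> 'a" where "DR_s g = snd (snd g)"

definition DR_Z :: "'a topology \<Rightarrow> 'a set \<Rightarrow> ('a \<Rightarrow> 'a) \<Rightarrow> 'a set \<Rightarrow> nat \<Rightarrow> nat \<Rightarrow> 'a set
    \<Rightarrow> ('a \<times> int \<times> 'a) set" where
  "DR_Z X D \<sigma> U m n V = {(x, int m - int n, y) | x y.
      x \<in> U \<inter> dom_pow X D \<sigma> m \<and> y \<in> V \<inter> dom_pow X D \<sigma> n \<and> (\<sigma> ^^ m) x = (\<sigma> ^^ n) y}"

definition DR_open :: "'a topology \<Rightarrow> 'a set \<Rightarrow> ('a \<Rightarrow> 'a) \<Rightarrow> ('a \<times> int \<times> 'a) set \<Rightarrow> bool" where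
  "DR_open X D \<sigma> W \<longleftrightarrow> W \<subseteq> DR_groupoid X D \<sigma> \<and>
     (\<forall>g\<in>W. \<exists>U m n V. openin X U \<and> openin X V \<and>
        g \<in> DR_Z X D \<sigma> U m n V \<and> DR_Z X D \<sigma> U m n V \<subseteq> W)"

definition DR_orbit :: "'a topology \<Rightarrow> 'a set \<Rightarrow> ('a \<Rightarrow> 'a) \<Rightarrow> 'a \<Rightarrow> 'a set" where
  "DR_orbit X D \<sigma> x = {y. \<exists>m n. y \<in> dom_pow X D \<sigma> m \<and> x \<in> dom_pow X D \<sigma> n \<and>
      (\<sigma> ^^ m) y = (\<sigma> ^^ n) x}"

definition periodic_pt :: "'a topology \<Rightarrow> 'a set \<Rightarrow> ('a \<Rightarrow> 'a) \<Rightarrow> 'a \<Rightarrow> bool" where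
  "periodic_pt X D \<sigma> x \<longleftrightarrow> (\<exists>l p. p \<ge> 1 \<and> x \<in> dom_pow X D \<sigma> (l + p) \<and>
      (\<sigma> ^^ (l + p)) x = (\<sigma> ^^ l) x)"

definition aperiodic_set :: "'a topology \<Rightarrow> 'a set \<Rightarrow> ('a \<Rightarrow> 'a) \<Rightarrow> 'a set" where
  "aperiodic_set X D \<sigma> = {x \<in> topspace X. \<not> periodic_pt X D \<sigma> x}"

definition P0_set :: "'a topology \<Rightarrow> 'a set \<Rightarrow> ('a \<Rightarrow> 'a) \<Rightarrow> 'a set" where
  "P0_set X D \<sigma> = {x \<in> topspace X. periodic_pt X D \<sigma> x \<and>
      openin (subtopology X (DR_orbit X D \<sigma> x)) {x}}"

definition DR_invariant :: "'a topology \<Rightarrow> 'a set \<Rightarrow> ('a \<Rightarrow> 'a) \<Rightarrow> 'a set \<Rightarrow> bool" where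
  "DR_invariant X D \<sigma> A \<longleftrightarrow> A \<subseteq> topspace X \<and>
     (\<forall>g\<in>DR_groupoid X D \<sigma>. DR_r g \<in> A \<longleftrightarrow> DR_s g \<in> A)"

definition DR_reduction :: "'a topology \<Rightarrow> 'a set \<Rightarrow> ('a \<Rightarrow> 'a) \<Rightarrow> 'a set \<Rightarrow> ('a \<times> int \<times> 'a) set" where
  "DR_reduction X D \<sigma> Y = {g \<in> DR_groupoid X D \<sigma>. DR_s g \<in> Y}"

definition iso_bundle :: "('a \<times> int \<times> 'a) set \<Rightarrow> ('a \<times> int \<times> 'a) set" where
  "iso_bundle H = {g \<in> H. DR_s g = DR_r g}"

definition DR_isotropy_at :: "'a topology \<Rightarrow> 'a set \<Rightarrow> ('a \<Rightarrow> 'a) \<Rightarrow> 'a \<Rightarrow> ('a \<times> int \<times> 'a) set" where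
  "DR_isotropy_at X D \<sigma> x = {g \<in> DR_groupoid X D \<sigma>. DR_r g = x \<and> DR_s g = x}"

text \<open>Iso((G_sigma)_{closure [x]})^interior_x: the interior of the isotropy bundle in the
  subspace H = (G_sigma)_Y (relatively open sets are W \<inter> H with W open), intersected with (G_sigma)^x_x.\<close>
definition DR_iso_interior_at :: "'a topology \<Rightarrow> 'a set \<Rightarrow> ('a \<Rightarrow> 'a) \<Rightarrow> 'a \<Rightarrow> ('a \<times> int \<times> 'a) set" where
  "DR_iso_interior_at X D \<sigma> x =
     (let Y = X closure_of (DR_orbit X D \<sigma> x);
          H = DR_reduction X D \<sigma> Y
      in {g \<in> H. \<exists>W. DR_open X D \<sigma> W \<and> g \<in> W \<and> W \<inter> H \<subseteq> iso_bundle H})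
     \<inter> DR_isotropy_at X D \<sigma> x"

end

theory Submission
  imports Defs
begin

text \<open>
  Two points lie in the same orbit iff some powers of \<open>\<sigma>\<close> identify them, and every power
  \<open>\<sigma>\<^sup>n\<close> is a local homeomorphism on its natural domain; periodicity and isolation in the
  orbit are transported along such maps, which gives invariance of \<open>A(\<sigma>)\<close> and \<open>P\<^sub>0(\<sigma>)\<close>.

  An isotropy element \<open>(x, m - n, x)\<close> lies in \<open>Z(U, m, n, V)\<close>. If \<open>x\<close> is aperiodic then \<open>m = n\<close>
  and \<open>Z(X, 0, 0, X)\<close> consists of units; if \<open>x \<in> P\<^sub>0(\<sigma>)\<close>, choose \<open>U = V\<close> meeting the orbit only
  in \<open>x\<close>, so that \<open>U\<close> meets the orbit closure only in \<open>x\<close> as well. Conversely, if \<open>x\<close> has period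
  \<open>p\<close> and \<open>(x, p, x)\<close> has a neighbourhood of isotropy, then for every \<open>z\<close> of the orbit close to \<open>x\<close>
  the point \<open>\<sigma>\<^sup>n z\<close> has period \<open>p\<close>, hence lies on the finite cycle of \<open>x\<close>. Separating \<open>\<sigma>\<^sup>n x\<close>
  from the rest of that cycle (T1 suffices) and using injectivity of \<open>\<sigma>\<^sup>n\<close> near \<open>x\<close> gives
  \<open>z = x\<close>.
\<close>

lemma funpow_add_apply: "(f ^^ (m + n)) x = (f ^^ n) ((f ^^ m) x)"
  by (metis comp_apply funpow_add add.commute)

text \<open>Unlike \<open>local_homeo_on\<close>, this form of local homeomorphism does not demand an open range
  or homeomorphic charts, which makes it stable under composition on the natural domain.\<close>
definition local_homeo_map :: "'a topology \<Rightarrow> 'a set \<Rightarrow> ('a \<Rightarrow> 'a) \<Rightarrow> bool" where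
  "local_homeo_map X A f \<longleftrightarrow> openin X A \<and>
     (\<forall>V. openin X V \<longrightarrow> openin X {x \<in> A. f x \<in> V}) \<and>
     (\<forall>x\<in>A. \<exists>N. openin X N \<and> x \<in> N \<and> N \<subseteq> A \<and> inj_on f N \<and>
        (\<forall>W. openin X W \<and> W \<subseteq> N \<longrightarrow> openin X (f ` W)))"

lemma local_homeo_map_openin_preimage:
  "local_homeo_map X A f \<Longrightarrow> openin X V \<Longrightarrow> openin X {x \<in> A. f x \<in> V}"
  by (simp add: local_homeo_map_def)

lemma local_homeo_map_chart:
  assumes "local_homeo_map X A f" "x \<in> A"
  obtains N where "openin X N" "x \<in> N" "N \<subseteq> A" "inj_on f N"
    "\<And>W. openin X W \<Longrightarrow> W \<subseteq> N \<Longrightarrow> openin X (f ` W)"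
proof -
  have "\<exists>N. openin X N \<and> x \<in> N \<and> N \<subseteq> A \<and> inj_on f N \<and>
        (\<forall>W. openin X W \<and> W \<subseteq> N \<longrightarrow> openin X (f ` W))"
    using assms by (simp add: local_homeo_map_def)
  then show thesis
    using that by blast
qed

lemma local_homeo_map_injective_nbhd:
  assumes "local_homeo_map X A f" "x \<in> A" "openin X U" "x \<in> U"
  obtains N where "openin X N" "x \<in> N" "N \<subseteq> U \<inter> A" "inj_on f N"
    "\<And>W. openin X W \<Longrightarrow> W \<subseteq> N \<Longrightarrow> openin X (f ` W)"
proof -
  obtain N where N: "openin X N" "x \<in> N" "N \<subseteq> A" "inj_on f N"
    "\<And>W. openin X W \<Longrightarrow> W \<subseteq> N \<Longrightarrow> openin X (f ` W)"
    by (rule local_homeo_map_chart[OF assms(1,2)]) (rule that)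
  show thesis
  proof (rule that[of "N \<inter> U"])
    show "inj_on f (N \<inter> U)" using N(4) by (rule inj_on_subset) blast
    show "openin X (f ` W)" if "openin X W" "W \<subseteq> N \<inter> U" for W
      using N(5) that by blast
  qed (use N assms(3,4) in auto)
qed

lemma local_homeo_map_id: "local_homeo_map X (topspace X) id"
proof -
  have "{x \<in> topspace X. x \<in> V} = V" if "openin X V" for V
    using openin_subset[OF that] by blast
  then show ?thesis
    unfolding local_homeo_map_def by (auto intro!: exI[of _ "topspace X"])
qed

lemma local_homeo_map_openin: "local_homeo_map X A f \<Longrightarrow> openin X A"
  by (simp add: local_homeo_map_def)

lemma local_homeo_map_compose:
  assumes f: "local_homeo_map X A f" and g: "local_homeo_map X B g"
  shows "local_homeo_map X {x \<in> A. f x \<in> B} (g \<circ> f)"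
  unfolding local_homeo_map_def
proof (intro conjI allI impI ballI)
  show "openin X {x \<in> A. f x \<in> B}"
    using local_homeo_map_openin_preimage[OF f local_homeo_map_openin[OF g]] .
next
  fix V assume "openin X V"
  then have "openin X {x \<in> A. f x \<in> {y \<in> B. g y \<in> V}}"
    using local_homeo_map_openin_preimage f g by blast
  then show "openin X {x \<in> {x \<in> A. f x \<in> B}. (g \<circ> f) x \<in> V}"
    by (simp add: conj_assoc)
next
  fix x assume "x \<in> {x \<in> A. f x \<in> B}"
  then have x: "x \<in> A" "f x \<in> B" by auto
  obtain N1 where N1: "openin X N1" "f x \<in> N1" "N1 \<subseteq> B" "inj_on g N1"
    "\<And>W. openin X W \<Longrightarrow> W \<subseteq> N1 \<Longrightarrow> openin X (g ` W)"
    by (rule local_homeo_map_chart[OF g x(2)]) (rule that)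
  have "x \<in> {z \<in> A. f z \<in> N1}" using x(1) N1(2) by blast
  then obtain N where N: "openin X N" "x \<in> N" "N \<subseteq> {z \<in> A. f z \<in> N1} \<inter> A"
    "inj_on f N" "\<And>W. openin X W \<Longrightarrow> W \<subseteq> N \<Longrightarrow> openin X (f ` W)"
    using local_homeo_map_injective_nbhd[OF f x(1) local_homeo_map_openin_preimage[OF f N1(1)]]
    by blast
  have fN: "f ` N \<subseteq> N1" using N(3) by blast
  show "\<exists>N. openin X N \<and> x \<in> N \<and> N \<subseteq> {x \<in> A. f x \<in> B} \<and> inj_on (g \<circ> f) N \<and>
      (\<forall>W. openin X W \<and> W \<subseteq> N \<longrightarrow> openin X ((g \<circ> f) ` W))"
  proof (intro exI conjI allI impI)
    show "N \<subseteq> {x \<in> A. f x \<in> B}" using N(3) N1(3) by blast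
    show "inj_on (g \<circ> f) N"
      using N(4) inj_on_subset[OF N1(4) fN] by (rule comp_inj_on)
    fix W assume W: "openin X W \<and> W \<subseteq> N"
    then have "openin X (g ` f ` W)"
      using N(5) N1(5) fN by blast
    then show "openin X ((g \<circ> f) ` W)" by (simp add: image_comp)
  qed (use N in auto)
qed

lemma local_homeo_on_imp_local_homeo_map:
  assumes "local_homeo_on X D \<sigma>"
  shows "local_homeo_map X D \<sigma>"
proof -
  have D: "openin X D" and chart: "\<And>x. x \<in> D \<Longrightarrow> \<exists>U. openin X U \<and> x \<in> U \<and> U \<subseteq> D \<and>
      openin X (\<sigma> ` U) \<and> homeomorphic_map (subtopology X U) (subtopology X (\<sigma> ` U)) \<sigma>"
    using assms unfolding local_homeo_on_def by auto
  have preimage: "openin X {z \<in> U. \<sigma> z \<in> V}"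
    if "openin X U" "openin X (\<sigma> ` U)" "homeomorphic_map (subtopology X U) (subtopology X (\<sigma> ` U)) \<sigma>"
      "openin X V" for U V
  proof -
    have "openin (subtopology X (\<sigma> ` U)) (V \<inter> \<sigma> ` U)"
      using that(4) by (auto simp: openin_subtopology)
    then have "openin (subtopology X U) {z \<in> topspace (subtopology X U). \<sigma> z \<in> V \<inter> \<sigma> ` U}"
      using homeomorphic_imp_continuous_map[OF that(3)] openin_continuous_map_preimage by blast
    moreover have "{z \<in> topspace (subtopology X U). \<sigma> z \<in> V \<inter> \<sigma> ` U} = {z \<in> U. \<sigma> z \<in> V}"
      using openin_subset[OF that(1)] by auto
    ultimately show ?thesis
      using openin_trans_full[OF _ that(1)] by auto
  qed
  show ?thesis
    unfolding local_homeo_map_def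
  proof (intro conjI allI impI ballI)
    fix V assume V: "openin X V"
    show "openin X {x \<in> D. \<sigma> x \<in> V}"
    proof (subst openin_subopen, intro ballI)
      fix x assume "x \<in> {x \<in> D. \<sigma> x \<in> V}"
      then obtain U where "openin X U" "x \<in> U" "U \<subseteq> D" "openin X (\<sigma> ` U)"
        "homeomorphic_map (subtopology X U) (subtopology X (\<sigma> ` U)) \<sigma>" "\<sigma> x \<in> V"
        using chart by blast
      then show "\<exists>T. openin X T \<and> x \<in> T \<and> T \<subseteq> {x \<in> D. \<sigma> x \<in> V}"
        using preimage[of U V] V by (intro exI[of _ "{z \<in> U. \<sigma> z \<in> V}"]) auto
    qed
  next
    fix x assume "x \<in> D"
    then obtain U where U: "openin X U" "x \<in> U" "U \<subseteq> D" "openin X (\<sigma> ` U)"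
      and hom: "homeomorphic_map (subtopology X U) (subtopology X (\<sigma> ` U)) \<sigma>"
      using chart by blast
    have "inj_on \<sigma> U"
      using homeomorphic_imp_injective_map[OF hom] openin_subset[OF U(1)] by (simp add: Int_absorb1)
    moreover have "openin X (\<sigma> ` W)" if "openin X W" "W \<subseteq> U" for W
    proof -
      have "openin (subtopology X U) W"
        using that by (auto simp: openin_subtopology intro!: exI[of _ W])
      then have "openin (subtopology X (\<sigma> ` U)) (\<sigma> ` W)"
        using homeomorphic_imp_open_map[OF hom] unfolding open_map_def by blast
      then show ?thesis using openin_trans_full U(4) by blast
    qed
    ultimately show "\<exists>N. openin X N \<and> x \<in> N \<and> N \<subseteq> D \<and> inj_on \<sigma> N \<and>
        (\<forall>W. openin X W \<and> W \<subseteq> N \<longrightarrow> openin X (\<sigma> ` W))"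
      using U by blast
  qed (rule D)
qed

lemma local_homeo_map_isolated_iff:
  assumes f: "local_homeo_map X A f" and x: "x \<in> A" "x \<in> S"
    and S: "\<And>w. w \<in> A \<Longrightarrow> w \<in> S \<longleftrightarrow> f w \<in> S"
  shows "openin (subtopology X S) {x} \<longleftrightarrow> openin (subtopology X S) {f x}"
proof
  assume "openin (subtopology X S) {x}"
  then obtain T where T: "openin X T" "{x} = T \<inter> S"
    unfolding openin_subtopology by blast
  have "x \<in> T" using T(2) by blast
  then obtain N where N: "openin X N" "x \<in> N" "N \<subseteq> T \<inter> A" "inj_on f N"
    "\<And>W. openin X W \<Longrightarrow> W \<subseteq> N \<Longrightarrow> openin X (f ` W)"
    using local_homeo_map_injective_nbhd[OF f x(1) T(1)] by blast
  have "{f x} = f ` N \<inter> S"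
  proof (intro equalityI subsetI)
    fix y assume "y \<in> f ` N \<inter> S"
    then obtain z where z: "z \<in> N" "y = f z" "f z \<in> S" by blast
    then have "z \<in> T \<inter> S" using N(3) S by blast
    then have "z = x" using T(2) by blast
    then show "y \<in> {f x}" using z(2) by simp
  qed (use N(2) S[OF x(1)] x(2) in blast)
  moreover have "openin X (f ` N)"
    using N(5)[OF N(1) order_refl] .
  ultimately show "openin (subtopology X S) {f x}"
    unfolding openin_subtopology by blast
next
  assume "openin (subtopology X S) {f x}"
  then obtain T where T: "openin X T" "{f x} = T \<inter> S"
    unfolding openin_subtopology by blast
  then have "x \<in> {z \<in> A. f z \<in> T}" using x(1) by blast
  then obtain N where N: "openin X N" "x \<in> N" "N \<subseteq> {z \<in> A. f z \<in> T} \<inter> A" "inj_on f N"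
    "\<And>W. openin X W \<Longrightarrow> W \<subseteq> N \<Longrightarrow> openin X (f ` W)"
    using local_homeo_map_injective_nbhd[OF f x(1) local_homeo_map_openin_preimage[OF f T(1)]]
    by blast
  have "{x} = N \<inter> S"
  proof (intro equalityI subsetI)
    fix z assume z: "z \<in> N \<inter> S"
    then have "f z \<in> T \<inter> S" using N(3) S by blast
    then have "f z = f x" using T(2) by blast
    then show "z \<in> {x}" using inj_onD[OF N(4)] N(2) z by blast
  qed (use N(2) x(2) in blast)
  then show "openin (subtopology X S) {x}"
    unfolding openin_subtopology using N(1) by blast
qed

locale partial_local_homeo =
  fixes X :: "'a topology" and D :: "'a set" and \<sigma> :: "'a \<Rightarrow> 'a"
  assumes local_homeo: "local_homeo_on X D \<sigma>"
begin

abbreviation Dom :: "nat \<Rightarrow> 'a set" where "Dom \<equiv> dom_pow X D \<sigma>"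

abbreviation orbit :: "'a \<Rightarrow> 'a set" where "orbit \<equiv> DR_orbit X D \<sigma>"

lemma image_subset_topspace: "\<sigma> ` D \<subseteq> topspace X"
  using local_homeo openin_subset unfolding local_homeo_on_def by blast

lemma Dom_subset: "Dom n \<subseteq> topspace X"
  by (auto simp: dom_pow_def)

lemma Dom_0 [simp]: "Dom 0 = topspace X"
  by (auto simp: dom_pow_def)

lemma Dom_Suc: "Dom (Suc n) = {x \<in> Dom n. (\<sigma> ^^ n) x \<in> D}"
  by (auto simp: dom_pow_def less_Suc_eq)

lemma Dom_antimono: "m \<le> n \<Longrightarrow> Dom n \<subseteq> Dom m"
  by (auto simp: dom_pow_def)

lemma funpow_in_topspace: "x \<in> Dom n \<Longrightarrow> (\<sigma> ^^ n) x \<in> topspace X"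
proof (induction n)
  case (Suc n)
  then show ?case using image_subset_topspace by (auto simp: Dom_Suc)
qed simp

lemma Dom_add: "x \<in> Dom (m + n) \<longleftrightarrow> x \<in> Dom m \<and> (\<sigma> ^^ m) x \<in> Dom n"
proof (induction n)
  case 0
  then show ?case using funpow_in_topspace by auto
next
  case (Suc n)
  then show ?case by (simp add: Dom_Suc funpow_add_apply)
qed

lemma local_homeo_map_funpow: "local_homeo_map X (Dom n) (\<sigma> ^^ n)"
proof (induction n)
  case 0
  then show ?case using local_homeo_map_id by (simp add: id_def)
next
  case (Suc n)
  have "local_homeo_map X {x \<in> Dom n. (\<sigma> ^^ n) x \<in> D} (\<sigma> \<circ> \<sigma> ^^ n)"
    using Suc.IH local_homeo_on_imp_local_homeo_map[OF local_homeo] by (rule local_homeo_map_compose)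
  then show ?case by (simp only: Dom_Suc funpow.simps(2))
qed

lemma funpow_eq_shift:
  assumes "x \<in> Dom a" "y \<in> Dom (b + i)" "(\<sigma> ^^ a) x = (\<sigma> ^^ b) y"
  shows "x \<in> Dom (a + i) \<and> (\<sigma> ^^ (a + i)) x = (\<sigma> ^^ (b + i)) y"
  using assms by (simp add: Dom_add funpow_add_apply)

lemma mem_orbit_iff: "x \<in> orbit y \<longleftrightarrow> (\<exists>m n. x \<in> Dom m \<and> y \<in> Dom n \<and> (\<sigma> ^^ m) x = (\<sigma> ^^ n) y)"
  by (simp add: DR_orbit_def)

lemma mem_orbit_self: "x \<in> topspace X \<Longrightarrow> x \<in> orbit x"
  unfolding mem_orbit_iff by (metis Dom_0)

lemma orbit_subset: "orbit x \<subseteq> topspace X"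
  unfolding DR_orbit_def dom_pow_def by blast

lemma mem_orbit_sym: "x \<in> orbit y \<Longrightarrow> y \<in> orbit x"
  unfolding mem_orbit_iff by metis

lemma mem_orbit_trans:
  assumes "x \<in> orbit y" "y \<in> orbit z"
  shows "x \<in> orbit z"
proof -
  obtain a b where ab: "x \<in> Dom a" "y \<in> Dom b" "(\<sigma> ^^ a) x = (\<sigma> ^^ b) y"
    using assms(1) unfolding mem_orbit_iff by blast
  obtain c d where cd: "y \<in> Dom c" "z \<in> Dom d" "(\<sigma> ^^ c) y = (\<sigma> ^^ d) z"
    using assms(2) unfolding mem_orbit_iff by blast
  \<comment> \<open>push both equations forward to the common level \<open>k\<close> of \<open>y\<close>\<close>
  define k where "k = max b c"
  have y: "y \<in> Dom (b + (k - b))" "y \<in> Dom (c + (k - c))"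
    using ab(2) cd(1) Dom_antimono[of b c] Dom_antimono[of c b] by (auto simp: k_def max_def)
  have "x \<in> Dom (a + (k - b)) \<and> (\<sigma> ^^ (a + (k - b))) x = (\<sigma> ^^ k) y"
    using funpow_eq_shift[OF ab(1) y(1) ab(3)] by (simp add: k_def)
  moreover have "z \<in> Dom (d + (k - c)) \<and> (\<sigma> ^^ (d + (k - c))) z = (\<sigma> ^^ k) y"
    using funpow_eq_shift[OF cd(2) y(2) cd(3)[symmetric]] by (simp add: k_def)
  ultimately show ?thesis
    unfolding mem_orbit_iff by metis
qed

lemma orbit_eq: "y \<in> orbit x \<Longrightarrow> orbit y = orbit x"
  using mem_orbit_trans mem_orbit_sym by blast

lemma funpow_mem_orbit: "x \<in> Dom n \<Longrightarrow> (\<sigma> ^^ n) x \<in> orbit x"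
  unfolding mem_orbit_iff using funpow_in_topspace by (metis Dom_0 funpow_0)

lemma funpow_mem_orbit_iff: "w \<in> Dom n \<Longrightarrow> (\<sigma> ^^ n) w \<in> orbit x \<longleftrightarrow> w \<in> orbit x"
  using funpow_mem_orbit mem_orbit_sym mem_orbit_trans by blast

lemma groupoid_mem_orbit: "g \<in> DR_groupoid X D \<sigma> \<Longrightarrow> DR_r g \<in> orbit (DR_s g)"
  unfolding DR_groupoid_def DR_r_def DR_s_def mem_orbit_iff by force

lemma funpow_period_shift:
  assumes "(\<sigma> ^^ (l + p)) x = (\<sigma> ^^ l) x" "l \<le> N"
  shows "(\<sigma> ^^ (N + p)) x = (\<sigma> ^^ N) x"
proof -
  have "(\<sigma> ^^ (N + p)) x = (\<sigma> ^^ (N - l)) ((\<sigma> ^^ (l + p)) x)"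
    using assms(2) funpow_add_apply[of "l + p" "N - l" \<sigma> x] by (simp add: algebra_simps)
  also have "\<dots> = (\<sigma> ^^ N) x"
    using assms funpow_add_apply[of l "N - l" \<sigma> x] by simp
  finally show ?thesis .
qed

lemma periodic_pt_in_Dom:
  assumes "periodic_pt X D \<sigma> x"
  shows "x \<in> Dom N"
proof -
  obtain l p where lp: "p \<ge> 1" "x \<in> Dom (l + p)" "(\<sigma> ^^ (l + p)) x = (\<sigma> ^^ l) x"
    using assms unfolding periodic_pt_def by blast
  have "x \<in> Dom (l + j)" for j
  proof (induction j rule: less_induct)
    case (less j)
    show ?case
    proof (cases "j \<le> p")
      case True
      then show ?thesis using Dom_antimono[of "l + j" "l + p"] lp(2) by auto
    next
      case False
      \<comment> \<open>after \<open>l + p\<close> steps the orbit is back at \<open>\<sigma>\<^sup>l x\<close>, which survives \<open>j - p\<close> more steps\<close>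
      then have "x \<in> Dom (l + (j - p))"
        using less.IH[of "j - p"] lp(1) by simp
      then have "(\<sigma> ^^ l) x \<in> Dom (j - p)"
        by (simp only: Dom_add)
      then have "x \<in> Dom ((l + p) + (j - p))"
        using lp(2,3) by (simp only: Dom_add)
      then show ?thesis using False by simp
    qed
  qed
  then show ?thesis using Dom_antimono[of N "l + N"] by auto
qed

lemma periodic_pt_orbit:
  assumes "periodic_pt X D \<sigma> x" "y \<in> orbit x"
  shows "periodic_pt X D \<sigma> y"
proof -
  obtain l p where lp: "p \<ge> 1" "(\<sigma> ^^ (l + p)) x = (\<sigma> ^^ l) x"
    using assms(1) unfolding periodic_pt_def by blast
  obtain a b where ab: "y \<in> Dom b" "(\<sigma> ^^ b) y = (\<sigma> ^^ a) x"
    using assms(2) unfolding mem_orbit_iff by metis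
  have x: "x \<in> Dom N" for N
    using periodic_pt_in_Dom[OF assms(1)] .
  have "y \<in> Dom (b + (l + p)) \<and> (\<sigma> ^^ (b + (l + p))) y = (\<sigma> ^^ (a + (l + p))) x"
    using funpow_eq_shift[OF ab(1) x ab(2)] .
  moreover have "(\<sigma> ^^ (b + l)) y = (\<sigma> ^^ (a + l)) x"
    using funpow_eq_shift[OF ab(1) x ab(2)] by blast
  moreover have "(\<sigma> ^^ ((a + l) + p)) x = (\<sigma> ^^ (a + l)) x"
    using funpow_period_shift[OF lp(2)] by simp
  ultimately show ?thesis
    unfolding periodic_pt_def using lp(1)
    by (intro exI[of _ "b + l"] exI[of _ p]) (simp add: add.assoc)
qed

lemma aperiodic_set_invariant: "DR_invariant X D \<sigma> (aperiodic_set X D \<sigma>)"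
  unfolding DR_invariant_def aperiodic_set_def
  using groupoid_mem_orbit periodic_pt_orbit mem_orbit_sym orbit_subset by blast

lemma isolated_in_orbit_iff_funpow:
  assumes "x \<in> Dom n"
  shows "openin (subtopology X (orbit x)) {(\<sigma> ^^ n) x} \<longleftrightarrow> openin (subtopology X (orbit x)) {x}"
  using local_homeo_map_isolated_iff[OF local_homeo_map_funpow assms, of "orbit x"]
    mem_orbit_self[OF Dom_subset[THEN subsetD, OF assms]] funpow_mem_orbit_iff by blast

lemma P0_set_orbit:
  assumes "y \<in> orbit x"
  shows "y \<in> P0_set X D \<sigma> \<longleftrightarrow> x \<in> P0_set X D \<sigma>"
proof -
  obtain m n where mn: "y \<in> Dom m" "x \<in> Dom n" "(\<sigma> ^^ m) y = (\<sigma> ^^ n) x"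
    using assms unfolding mem_orbit_iff by blast
  have orbits: "orbit y = orbit x"
    using orbit_eq[OF assms] .
  have "openin (subtopology X (orbit x)) {y} \<longleftrightarrow> openin (subtopology X (orbit x)) {x}"
    using isolated_in_orbit_iff_funpow[OF mn(1)] isolated_in_orbit_iff_funpow[OF mn(2)]
    by (simp add: orbits mn(3))
  moreover have "periodic_pt X D \<sigma> y \<longleftrightarrow> periodic_pt X D \<sigma> x"
    using periodic_pt_orbit assms mem_orbit_sym by blast
  ultimately show ?thesis
    unfolding P0_set_def using orbits orbit_subset assms mem_orbit_sym[OF assms] by auto
qed

lemma P0_set_invariant: "DR_invariant X D \<sigma> (P0_set X D \<sigma>)"
  unfolding DR_invariant_def using groupoid_mem_orbit P0_set_orbit
  by (auto simp: P0_set_def)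

lemma funpow_in_cycle:
  assumes "p \<ge> 1" "(\<sigma> ^^ (l + p)) x = (\<sigma> ^^ l) x"
  shows "(\<sigma> ^^ N) x \<in> (\<lambda>j. (\<sigma> ^^ j) x) ` {..<l + p}"
proof (induction N rule: less_induct)
  case (less N)
  show ?case
  proof (cases "N < l + p")
    case False
    then have "(\<sigma> ^^ N) x = (\<sigma> ^^ (N - p)) x"
      using funpow_period_shift[OF assms(2), of "N - p"] by simp
    then show ?thesis using less[of "N - p"] False assms(1) by simp
  qed auto
qed

lemma periodic_orbit_point_in_cycle:
  assumes "p \<ge> 1" "(\<sigma> ^^ (l + p)) x = (\<sigma> ^^ l) x"
    and "w \<in> orbit x" "q \<ge> 1" "(\<sigma> ^^ q) w = w"
  shows "w \<in> (\<lambda>j. (\<sigma> ^^ j) x) ` {..<l + p}"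
proof -
  obtain a b where ab: "(\<sigma> ^^ a) w = (\<sigma> ^^ b) x"
    using assms(3) unfolding mem_orbit_iff by blast
  have "((\<sigma> ^^ q) ^^ a) w = w" for a
    using assms(5) by (induction a) simp_all
  then have "(\<sigma> ^^ (a + (q * a - a))) w = w"
    using assms(4) by (simp add: funpow_mult mult.commute)
  then have "w = (\<sigma> ^^ (b + (q * a - a))) x"
    by (simp only: funpow_add_apply ab)
  then show ?thesis
    using funpow_in_cycle[OF assms(1,2)] by simp
qed

lemma cycle_isolating_nbhd:
  assumes "t1_space X" "periodic_pt X D \<sigma> x"
  obtains N where "openin X N" "(\<sigma> ^^ k) x \<in> N"
    "\<And>w q. w \<in> N \<Longrightarrow> w \<in> orbit x \<Longrightarrow> q \<ge> 1 \<Longrightarrow> (\<sigma> ^^ q) w = w \<Longrightarrow> w = (\<sigma> ^^ k) x"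
proof -
  obtain l p where lp: "p \<ge> 1" "(\<sigma> ^^ (l + p)) x = (\<sigma> ^^ l) x"
    using assms(2) unfolding periodic_pt_def by blast
  define C where "C = (\<lambda>j. (\<sigma> ^^ j) x) ` {..<l + p}"
  have "C \<subseteq> topspace X"
    using funpow_in_topspace periodic_pt_in_Dom[OF assms(2)] by (auto simp: C_def)
  then have "C - {(\<sigma> ^^ k) x} \<subseteq> topspace X" "finite (C - {(\<sigma> ^^ k) x})"
    by (auto simp: C_def)
  then have "closedin X (C - {(\<sigma> ^^ k) x})"
    using assms(1) unfolding t1_space_closedin_finite by blast
  then have "openin X (topspace X - (C - {(\<sigma> ^^ k) x}))"
    by (simp add: openin_diff)
  moreover have "(\<sigma> ^^ k) x \<in> topspace X"
    using funpow_in_topspace periodic_pt_in_Dom[OF assms(2)] .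
  moreover have "w = (\<sigma> ^^ k) x"
    if "w \<in> topspace X - (C - {(\<sigma> ^^ k) x})" "w \<in> orbit x" "q \<ge> 1" "(\<sigma> ^^ q) w = w" for w q
    using that periodic_orbit_point_in_cycle[OF lp that(2-4)] by (simp add: C_def)
  ultimately show thesis
    using that[of "topspace X - (C - {(\<sigma> ^^ k) x})"] by blast
qed

lemma mem_DR_groupoid:
  "(y, k, z) \<in> DR_groupoid X D \<sigma> \<longleftrightarrow>
     (\<exists>m n. k = int m - int n \<and> y \<in> Dom m \<and> z \<in> Dom n \<and> (\<sigma> ^^ m) y = (\<sigma> ^^ n) z)"
  by (auto simp: DR_groupoid_def)

lemma mem_DR_Z:
  "(y, k, z) \<in> DR_Z X D \<sigma> U m n V \<longleftrightarrow>
     k = int m - int n \<and> y \<in> U \<inter> Dom m \<and> z \<in> V \<inter> Dom n \<and> (\<sigma> ^^ m) y = (\<sigma> ^^ n) z"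
  by (auto simp: DR_Z_def)

lemma DR_open_Z: "openin X U \<Longrightarrow> openin X V \<Longrightarrow> DR_open X D \<sigma> (DR_Z X D \<sigma> U m n V)"
  unfolding DR_open_def by (auto simp: DR_Z_def DR_groupoid_def)

lemma DR_isotropy_atE:
  assumes "g \<in> DR_isotropy_at X D \<sigma> x"
  obtains m n where "g = (x, int m - int n, x)" "x \<in> Dom m" "x \<in> Dom n" "(\<sigma> ^^ m) x = (\<sigma> ^^ n) x"
  using assms unfolding DR_isotropy_at_def DR_groupoid_def DR_r_def DR_s_def by force

lemma DR_iso_interior_at_subset: "DR_iso_interior_at X D \<sigma> x \<subseteq> DR_isotropy_at X D \<sigma> x"
  unfolding DR_iso_interior_at_def by blast

lemma DR_iso_interior_atE:
  assumes "g \<in> DR_iso_interior_at X D \<sigma> x"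
  obtains U m n V where "openin X U" "openin X V" "g \<in> DR_Z X D \<sigma> U m n V"
    "\<And>h. h \<in> DR_Z X D \<sigma> U m n V \<Longrightarrow> DR_s h \<in> orbit x \<Longrightarrow> DR_r h = DR_s h"
proof -
  define H where "H = DR_reduction X D \<sigma> (X closure_of orbit x)"
  obtain W where W: "DR_open X D \<sigma> W" "g \<in> W" "W \<inter> H \<subseteq> iso_bundle H"
    using assms unfolding DR_iso_interior_at_def Let_def H_def by blast
  then obtain U m n V where UV: "openin X U" "openin X V" "g \<in> DR_Z X D \<sigma> U m n V"
    "DR_Z X D \<sigma> U m n V \<subseteq> W"
    unfolding DR_open_def by blast
  have "DR_r h = DR_s h" if "h \<in> DR_Z X D \<sigma> U m n V" "DR_s h \<in> orbit x" for h
  proof -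
    have "h \<in> W" "h \<in> DR_groupoid X D \<sigma>"
      using that(1) UV(4) W(1) unfolding DR_open_def by blast+
    moreover have "DR_s h \<in> X closure_of orbit x"
      using that(2) closure_of_subset[OF orbit_subset] by blast
    ultimately have "h \<in> iso_bundle H"
      using W(3) unfolding H_def DR_reduction_def by blast
    then show ?thesis unfolding iso_bundle_def by simp
  qed
  then show thesis using that UV(1-3) by blast
qed

lemma DR_iso_interior_atI:
  assumes g: "g \<in> DR_isotropy_at X D \<sigma> x" and UV: "openin X U" "openin X V" "g \<in> DR_Z X D \<sigma> U m n V"
    and iso: "\<And>h. h \<in> DR_Z X D \<sigma> U m n V \<Longrightarrow> DR_s h \<in> X closure_of orbit x \<Longrightarrow> DR_r h = DR_s h"
  shows "g \<in> DR_iso_interior_at X D \<sigma> x"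
proof -
  define H where "H = DR_reduction X D \<sigma> (X closure_of orbit x)"
  obtain k where gk: "g = (x, k, x)" "g \<in> DR_groupoid X D \<sigma>"
    using g unfolding DR_isotropy_at_def DR_r_def DR_s_def by (cases g) auto
  have "x \<in> topspace X"
    using g by (rule DR_isotropy_atE) (use Dom_subset in blast)
  then have "x \<in> X closure_of orbit x"
    using closure_of_subset[OF orbit_subset] mem_orbit_self by blast
  then have "g \<in> H"
    using gk unfolding H_def DR_reduction_def DR_s_def by simp
  moreover have "DR_Z X D \<sigma> U m n V \<inter> H \<subseteq> iso_bundle H"
    using iso unfolding H_def DR_reduction_def iso_bundle_def by auto
  ultimately show ?thesis
    using g DR_open_Z[OF UV(1,2)] UV(3)
    unfolding DR_iso_interior_at_def Let_def H_def[symmetric] by blast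
qed

lemma periodic_pt_if_funpow_eq:
  assumes "x \<in> Dom m" "x \<in> Dom n" "m \<noteq> n" "(\<sigma> ^^ m) x = (\<sigma> ^^ n) x"
  shows "periodic_pt X D \<sigma> x"
proof (cases "m < n")
  case True
  then show ?thesis unfolding periodic_pt_def using assms
    by (intro exI[of _ m] exI[of _ "n - m"]) auto
next
  case False
  then show ?thesis unfolding periodic_pt_def using assms
    by (intro exI[of _ n] exI[of _ "m - n"]) auto
qed

lemma aperiodic_isotropy_in_iso_interior:
  assumes "x \<in> aperiodic_set X D \<sigma>" "g \<in> DR_isotropy_at X D \<sigma> x"
  shows "g \<in> DR_iso_interior_at X D \<sigma> x"
proof -
  obtain m n where g: "g = (x, int m - int n, x)" "x \<in> Dom m" "x \<in> Dom n" "(\<sigma> ^^ m) x = (\<sigma> ^^ n) x"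
    using assms(2) by (rule DR_isotropy_atE)
  then have "m = n"
    using assms(1) periodic_pt_if_funpow_eq unfolding aperiodic_set_def by blast
  \<comment> \<open>\<open>Z(X, 0, 0, X)\<close> is the unit space, which lies in the isotropy\<close>
  show ?thesis
  proof (rule DR_iso_interior_atI[OF assms(2) openin_topspace openin_topspace])
    show "g \<in> DR_Z X D \<sigma> (topspace X) 0 0 (topspace X)"
      using g \<open>m = n\<close> Dom_subset by (auto simp: mem_DR_Z)
  qed (auto simp: DR_Z_def DR_r_def DR_s_def)
qed

lemma P0_isotropy_in_iso_interior:
  assumes "t1_space X" "x \<in> P0_set X D \<sigma>" "g \<in> DR_isotropy_at X D \<sigma> x"
  shows "g \<in> DR_iso_interior_at X D \<sigma> x"
proof -
  obtain m n where g: "g = (x, int m - int n, x)" "x \<in> Dom m" "x \<in> Dom n" "(\<sigma> ^^ m) x = (\<sigma> ^^ n) x"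
    using assms(3) by (rule DR_isotropy_atE)
  obtain U where U: "openin X U" "{x} = U \<inter> orbit x"
    using assms(2) unfolding P0_set_def openin_subtopology by blast
  have closure_x: "X closure_of {x} = {x}"
    using assms(1) Dom_subset g(2) by (simp add: closure_of_eq t1_space_closedin_singleton subset_iff)
  show ?thesis
  proof (rule DR_iso_interior_atI[OF assms(3) U(1) U(1)])
    show "g \<in> DR_Z X D \<sigma> U m n U"
      using g U(2) by (auto simp: mem_DR_Z)
  next
    fix h assume h: "h \<in> DR_Z X D \<sigma> U m n U" "DR_s h \<in> X closure_of orbit x"
    then obtain y z where yz: "h = (y, int m - int n, z)" "y \<in> U \<inter> Dom m" "z \<in> U \<inter> Dom n"
      "(\<sigma> ^^ m) y = (\<sigma> ^^ n) z"
      unfolding DR_Z_def by blast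
    have "z \<in> X closure_of (U \<inter> orbit x)"
      using h(2) yz(1,3) openin_Int_closure_of_subset[OF U(1)] by (auto simp: DR_s_def)
    then have "z = x"
      using closure_x U(2) by (metis singletonD)
    then have "y \<in> orbit x"
      using yz g(3) unfolding mem_orbit_iff by blast
    then have "y \<in> U \<inter> orbit x"
      using yz(2) by blast
    then show "DR_r h = DR_s h"
      using U(2) yz(1) \<open>z = x\<close> by (auto simp: DR_r_def DR_s_def)
  qed
qed

lemma iso_interior_periodic_nbhd:
  assumes "(x, int p, x) \<in> DR_iso_interior_at X D \<sigma> x"
  obtains N n where "openin X N" "x \<in> N" "N \<subseteq> Dom n" "inj_on (\<sigma> ^^ n) N"
    "\<And>z. z \<in> N \<Longrightarrow> z \<in> orbit x \<Longrightarrow> (\<sigma> ^^ p) ((\<sigma> ^^ n) z) = (\<sigma> ^^ n) z"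
proof -
  obtain U V m n where UV: "openin X U" "openin X V" "(x, int p, x) \<in> DR_Z X D \<sigma> U m n V"
    and iso: "\<And>h. h \<in> DR_Z X D \<sigma> U m n V \<Longrightarrow> DR_s h \<in> orbit x \<Longrightarrow> DR_r h = DR_s h"
    by (rule DR_iso_interior_atE[OF assms]) blast
  have x: "x \<in> U" "x \<in> Dom m" "x \<in> V" "x \<in> Dom n" "(\<sigma> ^^ m) x = (\<sigma> ^^ n) x"
    and m: "m = n + p"
    using UV(3) by (auto simp: mem_DR_Z)
  obtain N1 where N1: "openin X N1" "x \<in> N1" "N1 \<subseteq> V \<inter> Dom n" "inj_on (\<sigma> ^^ n) N1"
    "\<And>W. openin X W \<Longrightarrow> W \<subseteq> N1 \<Longrightarrow> openin X ((\<sigma> ^^ n) ` W)"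
    by (rule local_homeo_map_injective_nbhd[OF local_homeo_map_funpow x(4) UV(2) x(3)]) (rule that)
  obtain N2 where N2: "openin X N2" "x \<in> N2" "N2 \<subseteq> U \<inter> Dom m" "inj_on (\<sigma> ^^ m) N2"
    "\<And>W. openin X W \<Longrightarrow> W \<subseteq> N2 \<Longrightarrow> openin X ((\<sigma> ^^ m) ` W)"
    by (rule local_homeo_map_injective_nbhd[OF local_homeo_map_funpow x(2) UV(1) x(1)]) (rule that)
  \<comment> \<open>near \<open>x\<close>, \<open>\<sigma>\<^sup>n z\<close> has a preimage \<open>y\<close> under \<open>\<sigma>\<^sup>m\<close> close to \<open>x\<close>, and \<open>(y, p, z)\<close> is isotropy\<close>
  define N where "N = N1 \<inter> {z \<in> Dom n. (\<sigma> ^^ n) z \<in> (\<sigma> ^^ m) ` N2}"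
  show thesis
  proof (rule that[of N n])
    show "openin X N"
      unfolding N_def
      by (rule openin_Int[OF N1(1) local_homeo_map_openin_preimage[OF local_homeo_map_funpow]])
        (rule N2(5)[OF N2(1) order_refl])
    have "(\<sigma> ^^ n) x \<in> (\<sigma> ^^ m) ` N2"
      using N2(2) x(5) by (metis image_eqI)
    then show "x \<in> N"
      unfolding N_def using N1(2) x(4) by simp
    show "N \<subseteq> Dom n" "inj_on (\<sigma> ^^ n) N"
      unfolding N_def using N1(3) inj_on_subset[OF N1(4)] by auto
  next
    fix z assume z: "z \<in> N" "z \<in> orbit x"
    then obtain y where y: "y \<in> N2" "(\<sigma> ^^ m) y = (\<sigma> ^^ n) z"
      unfolding N_def by auto
    have "(y, int m - int n, z) \<in> DR_Z X D \<sigma> U m n V"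
      using y N2(3) z(1) N1(3) unfolding N_def mem_DR_Z by auto
    then have "y = z"
      using iso z(2) by (fastforce simp: DR_r_def DR_s_def)
    then show "(\<sigma> ^^ p) ((\<sigma> ^^ n) z) = (\<sigma> ^^ n) z"
      using y(2) m funpow_add_apply[of n p \<sigma> z] by simp
  qed
qed

lemma isolated_in_orbit_if_isotropy_open:
  assumes "t1_space X" "periodic_pt X D \<sigma> x"
    and "DR_isotropy_at X D \<sigma> x \<subseteq> DR_iso_interior_at X D \<sigma> x"
  shows "openin (subtopology X (orbit x)) {x}"
proof -
  obtain l p where lp: "p \<ge> 1" "x \<in> Dom (l + p)" "(\<sigma> ^^ (l + p)) x = (\<sigma> ^^ l) x"
    using assms(2) unfolding periodic_pt_def by blast
  have "x \<in> Dom l"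
    using lp(2) Dom_antimono[of l "l + p"] by auto
  then have "(x, int (l + p) - int l, x) \<in> DR_groupoid X D \<sigma>"
    using lp(2,3) unfolding mem_DR_groupoid by blast
  then have iso: "(x, int p, x) \<in> DR_iso_interior_at X D \<sigma> x"
    using assms(3) unfolding DR_isotropy_at_def DR_r_def DR_s_def by auto
  obtain N n where N: "openin X N" "x \<in> N" "N \<subseteq> Dom n" "inj_on (\<sigma> ^^ n) N"
    and per: "\<And>z. z \<in> N \<Longrightarrow> z \<in> orbit x \<Longrightarrow> (\<sigma> ^^ p) ((\<sigma> ^^ n) z) = (\<sigma> ^^ n) z"
    by (rule iso_interior_periodic_nbhd[OF iso]) (rule that)
  obtain M where M: "openin X M" "(\<sigma> ^^ n) x \<in> M"
    and cycle: "\<And>w q. w \<in> M \<Longrightarrow> w \<in> orbit x \<Longrightarrow> q \<ge> 1 \<Longrightarrow> (\<sigma> ^^ q) w = w \<Longrightarrow> w = (\<sigma> ^^ n) x"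
    by (rule cycle_isolating_nbhd[OF assms(1,2)]) (rule that)
  define N' where "N' = N \<inter> {z \<in> Dom n. (\<sigma> ^^ n) z \<in> M}"
  have "{x} = N' \<inter> orbit x"
  proof (intro equalityI subsetI)
    fix z assume z: "z \<in> N' \<inter> orbit x"
    then have "(\<sigma> ^^ n) z \<in> orbit x"
      using funpow_mem_orbit_iff unfolding N'_def by blast
    then have "(\<sigma> ^^ n) z = (\<sigma> ^^ n) x"
      using cycle per z lp(1) unfolding N'_def by blast
    then show "z \<in> {x}"
      using inj_onD[OF N(4)] N(2) z unfolding N'_def by blast
  qed (use N(2,3) M(2) mem_orbit_self Dom_subset in \<open>auto simp: N'_def\<close>)
  moreover have "openin X N'"
    unfolding N'_def by (rule openin_Int[OF N(1) local_homeo_map_openin_preimage[OF local_homeo_map_funpow M(1)]])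
  ultimately show ?thesis
    unfolding openin_subtopology by blast
qed

end

theorem lemma4p2:
  fixes X :: "'a topology" and D :: "'a set" and \<sigma> :: "'a \<Rightarrow> 'a"
  assumes "Hausdorff_space X" and "locally_compact_space X"
    and "local_homeo_on X D \<sigma>"
  shows "DR_invariant X D \<sigma> (aperiodic_set X D \<sigma>) \<and>
         DR_invariant X D \<sigma> (P0_set X D \<sigma>) \<and>
         aperiodic_set X D \<sigma> \<union> P0_set X D \<sigma> =
         {x \<in> topspace X. DR_iso_interior_at X D \<sigma> x = DR_isotropy_at X D \<sigma> x}"
proof -
  interpret partial_local_homeo X D \<sigma>
    using assms(3) by unfold_locales
  have t1: "t1_space X"
    using assms(1) by (rule Hausdorff_imp_t1_space)
  have "aperiodic_set X D \<sigma> \<union> P0_set X D \<sigma> =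
         {x \<in> topspace X. DR_isotropy_at X D \<sigma> x \<subseteq> DR_iso_interior_at X D \<sigma> x}"
  proof (intro equalityI subsetI)
    fix x assume "x \<in> aperiodic_set X D \<sigma> \<union> P0_set X D \<sigma>"
    then show "x \<in> {x \<in> topspace X. DR_isotropy_at X D \<sigma> x \<subseteq> DR_iso_interior_at X D \<sigma> x}"
      using aperiodic_isotropy_in_iso_interior P0_isotropy_in_iso_interior[OF t1]
      unfolding aperiodic_set_def P0_set_def by blast
  next
    fix x assume "x \<in> {x \<in> topspace X. DR_isotropy_at X D \<sigma> x \<subseteq> DR_iso_interior_at X D \<sigma> x}"
    then show "x \<in> aperiodic_set X D \<sigma> \<union> P0_set X D \<sigma>"
      using isolated_in_orbit_if_isotropy_open[OF t1]
      unfolding aperiodic_set_def P0_set_def by blast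
  qed
  then show ?thesis
    using aperiodic_set_invariant P0_set_invariant DR_iso_interior_at_subset by blast
qed

end
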